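(* For $(\varphi,\xi,\theta)\in[0,\pi/2]\times[0,\pi]\times[0,\pi/2]$ let $C_\theta=\cos\theta\,(|\uparrow\rangle\langle\uparrow|+|\downarrow\rangle\langle\downarrow|)+\sin\theta\,(|\uparrow\rangle\langle\downarrow|-|\downarrow\rangle\langle\uparrow|)$ and $\gamma_{\varphi,\xi}=\cos\varphi\,|\uparrow\rangle+\sin\varphi\,e^{i\xi}|\downarrow\rangle$. Then for every coin setup $(C,\gamma)$, with $C\in U(2)$ arbitrary and $\gamma\in\mathbb{C}^2$ an arbitrary unit vector, there exists $(\varphi,\xi,\theta)\in[0,\pi/2]\times[0,\pi]\times[0,\pi/2]$ such that $(C,\gamma)\sim_d(C_\theta,\gamma_{\varphi,\xi})$. That is, the map $(\varphi,\xi,\theta)\mapsto(C_\theta,\gamma_{\varphi,\xi})$ is surjective onto the set of distributional equivalence classes of all coin setups.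
   Context: Let $\mathcal{H}=\ell^2(\mathbb{Z})\otimes\mathbb{C}^2$, with position basis $\{|j\rangle: j\in\mathbb{Z}\}$ of $\ell^2(\mathbb{Z})$ and orthonormal basis $\{|\uparrow\rangle,|\downarrow\rangle\}$ of $\mathbb{C}^2$. A (quantum) coin is any $C\in U(2)$. The conditional translation is $T=\sum_{j\in\mathbb{Z}}|j+1\rangle\langle j|\otimes|\uparrow\rangle\langle\uparrow|+\sum_{j\in\mathbb{Z}}|j-1\rangle\langle j|\otimes|\downarrow\rangle\langle\downarrow|$ and the walk operator is $W(C)=T(\mathbb{1}\otimes C)$. A coin setup is a pair $(C,\gamma)$ with $C\in U(2)$ and $\gamma\in\mathbb{C}^2$ a unit vector (the initial coin state). Its induced distributions are $p_{(C,\gamma)}(j,n)=\langle\psi_n|(|j\rangle\langle j|\otimes\mathbb{1})|\psi_n\rangle$ with $\psi_n=W(C)^n(|0\rangle\otimes\gamma)$, for $j\in\mathbb{Z}$, $n\in\mathbb{N}$. Two coin setups $\mathcal{C}_1,\mathcal{C}_2$ are distributionally equivalent, written $\mathcal{C}_1\sim_d\mathcal{C}_2$, if $p_{\mathcal{C}_1}(j,n)=p_{\mathcal{C}_2}(j,n)$ for all $j\in\mathbb{Z}$, $n\in\mathbb{N}$. *)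

theory Defs
  imports "HOL-Analysis.Analysis"
begin

text \<open>Coin space C^2 is modelled as complex^2; index 1 is the spin-up basis
vector, index 2 the spin-down basis vector. A 2x2 matrix C :: complex^2^2 has
entries C$i$j = <i|C|j>. A state of H = l^2(Z) (x) C^2 is a function int => complex^2.\<close>

definition adjoint2 :: "complex^2^2 \<Rightarrow> complex^2^2" where
  "adjoint2 C = (\<chi> i j. cnj (C $ j $ i))"

definition unitary2 :: "complex^2^2 \<Rightarrow> bool" where
  "unitary2 C \<longleftrightarrow> C ** adjoint2 C = mat 1 \<and> adjoint2 C ** C = mat 1"

definition walk_op :: "complex^2^2 \<Rightarrow> (int \<Rightarrow> complex^2) \<Rightarrow> (int \<Rightarrow> complex^2)" where
  "walk_op C \<psi> = (\<lambda>j. \<chi> s. if s = 1 then (C *v \<psi> (j - 1)) $ 1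
                               else (C *v \<psi> (j + 1)) $ 2)"

definition initial_state :: "complex^2 \<Rightarrow> (int \<Rightarrow> complex^2)" where
  "initial_state \<gamma> = (\<lambda>j. if j = 0 then \<gamma> else 0)"

definition walk_state :: "complex^2^2 \<Rightarrow> complex^2 \<Rightarrow> nat \<Rightarrow> (int \<Rightarrow> complex^2)" where
  "walk_state C \<gamma> n = (walk_op C ^^ n) (initial_state \<gamma>)"

text \<open>p_(C,gamma)(j,n) = <psi_n| (|j><j| (x) 1) |psi_n> = ||psi_n(j)||^2.\<close>
definition induced_dist :: "(complex^2^2) \<times> (complex^2) \<Rightarrow> int \<Rightarrow> nat \<Rightarrow> real" where
  "induced_dist S j n = (norm (walk_state (fst S) (snd S) n j))\<^sup>2"

definition dist_equiv :: "(complex^2^2) \<times> (complex^2) \<Rightarrow> (complex^2^2) \<times> (complex^2) \<Rightarrow> bool" where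
  "dist_equiv S1 S2 \<longleftrightarrow> (\<forall>j n. induced_dist S1 j n = induced_dist S2 j n)"

definition coin_theta :: "real \<Rightarrow> complex^2^2" where
  "coin_theta \<theta> = (\<chi> i j. if i = j then complex_of_real (cos \<theta>)
                       else if i = 1 then complex_of_real (sin \<theta>)
                       else - complex_of_real (sin \<theta>))"

definition gamma_phi_xi :: "real \<Rightarrow> real \<Rightarrow> complex^2" where
  "gamma_phi_xi \<phi> \<xi> = (\<chi> s. if s = 1 then complex_of_real (cos \<phi>)
                        else complex_of_real (sin \<phi>) * exp (\<i> * complex_of_real \<xi>))"

end

theory Submission
  imports Defs
begin

text \<open>Two operations on a coin setup leave the induced distributions unchanged. A gauge
transformation, with unit phases \<open>u, z, e\<^sub>1, e\<^sub>2\<close>, only multiplies the spin-\<open>s\<close>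
amplitude at position \<open>j\<close> after \<open>n\<close> steps by \<open>u\<^sup>n z\<^sup>j e\<^sub>s\<close>: the up component moves
right and picks up \<open>z\<close>, the down component moves left and picks up \<open>z\<^sup>-\<^sup>1\<close>. Complex
conjugation of coin and initial state conjugates every amplitude. A unitary coin has the form
\<open>[[a, b], [-\<Delta> cnj b, \<Delta> cnj a]]\<close> with \<open>|\<Delta>| = 1\<close>, and a gauge transformation turns it into
\<open>C\<^sub>\<theta>\<close> with \<open>cos \<theta> = |a|\<close>, \<open>sin \<theta> = |b|\<close>. For \<open>C\<^sub>\<theta>\<close> the only freedom left in a unit
initial state is a global phase, which a gauge transformation removes, and the sign of the
relative phase \<open>\<xi>\<close>, which conjugation flips since \<open>C\<^sub>\<theta>\<close> is real.\<close>

lemma matrix_vector_mult_2_nth: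
  "((C :: 'a::comm_semiring_1^2^2) *v x) $ i = C$i$1 * x$1 + C$i$2 * x$2"
  by (simp add: matrix_vector_mult_def sum_2)

lemma walk_op_nth_1:
  "walk_op C \<psi> j $ 1 = C$1$1 * \<psi> (j - 1) $ 1 + C$1$2 * \<psi> (j - 1) $ 2"
  by (simp add: walk_op_def matrix_vector_mult_2_nth)

lemma walk_op_nth_2:
  "walk_op C \<psi> j $ 2 = C$2$1 * \<psi> (j + 1) $ 1 + C$2$2 * \<psi> (j + 1) $ 2"
  by (simp add: walk_op_def matrix_vector_mult_2_nth)

lemma walk_state_0: "walk_state C \<gamma> 0 = initial_state \<gamma>"
  by (simp add: walk_state_def)

lemma walk_state_Suc: "walk_state C \<gamma> (Suc n) = walk_op C (walk_state C \<gamma> n)"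
  by (simp add: walk_state_def)

lemma norm_vec2:
  "norm (x :: 'a::real_normed_vector^2) = sqrt ((norm (x$1))\<^sup>2 + (norm (x$2))\<^sup>2)"
  by (simp add: norm_vec_def L2_set_def sum_2)

lemma dist_equivI:
  assumes "\<And>n j s. norm (walk_state C \<gamma> n j $ s) = norm (walk_state C' \<gamma>' n j $ s)"
  shows "dist_equiv (C, \<gamma>) (C', \<gamma>')"
  using assms by (simp add: dist_equiv_def induced_dist_def norm_vec2)

lemma dist_equiv_trans: "dist_equiv S1 S2 \<Longrightarrow> dist_equiv S2 S3 \<Longrightarrow> dist_equiv S1 S3"
  by (simp add: dist_equiv_def)

text \<open>The hypotheses say \<open>C diag(e) = u diag(z, z\<^sup>-\<^sup>1) diag(e) C'\<close>.\<close>

lemma walk_state_gauge: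
  fixes C C' :: "complex^2^2" and e :: "complex^2"
  assumes "z \<noteq> 0"
    and row1: "\<And>k. C$1$k * e$k = u * z * e$1 * C'$1$k"
    and row2: "\<And>k. C$2$k * e$k * z = u * e$2 * C'$2$k"
  shows "walk_state C (e * \<gamma>) n j $ s = u^n * z powi j * (e$s * walk_state C' \<gamma> n j $ s)"
proof (induction n arbitrary: j s)
  case 0
  then show ?case by (simp add: walk_state_0 initial_state_def)
next
  case (Suc n)
  have shift: "z powi j = z * z powi (j - 1)" "z powi (j + 1) = z * z powi j"
    using \<open>z \<noteq> 0\<close> by (simp_all add: power_int_diff power_int_add)
  consider "s = 1" | "s = 2"
    using exhaust_2 by blast
  then show ?case
  proof cases
    case 1
    have "C$1$1 * (c * (e$1 * x)) + C$1$2 * (c * (e$2 * y))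
        = u * z * c * (e$1 * (C'$1$1 * x + C'$1$2 * y))" for c x y
      using row1[of 1] row1[of 2] by algebra
    then show ?thesis
      unfolding 1 walk_state_Suc walk_op_nth_1 Suc.IH by (simp only:) (simp add: shift(1) ac_simps)
  next
    case 2
    have "C$2$1 * (a * (z * b) * (e$1 * x)) + C$2$2 * (a * (z * b) * (e$2 * y))
        = u * a * b * (e$2 * (C'$2$1 * x + C'$2$2 * y))" for a b x y
      using row2[of 1] row2[of 2] by algebra
    then show ?thesis
      unfolding 2 walk_state_Suc walk_op_nth_2 Suc.IH shift(2) by (simp only:) (simp add: ac_simps)
  qed
qed

lemma dist_equiv_gauge:
  fixes C C' :: "complex^2^2" and e :: "complex^2"
  assumes "norm u = 1" "norm z = 1" "norm (e$1) = 1" "norm (e$2) = 1"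
    and row1: "\<And>k. C$1$k * e$k = u * z * e$1 * C'$1$k"
    and row2: "\<And>k. C$2$k * e$k * z = u * e$2 * C'$2$k"
  shows "dist_equiv (C, e * \<gamma>) (C', \<gamma>)"
proof (rule dist_equivI)
  fix n j s
  have "z \<noteq> 0" "norm (z powi j) = 1" "norm (e$s) = 1"
    using assms(2-4) exhaust_2[of s] by (auto simp: norm_power_int)
  then show "norm (walk_state C (e * \<gamma>) n j $ s) = norm (walk_state C' \<gamma> n j $ s)"
    using assms(1)
    by (simp add: walk_state_gauge[OF \<open>z \<noteq> 0\<close> row1 row2] norm_mult norm_power)
qed

lemma dist_equiv_global_phase:
  assumes "norm \<omega> = 1"
  shows "dist_equiv (C, \<omega> *s \<gamma>) (C, \<gamma>)"
proof -
  have "\<omega> *s \<gamma> = vec \<omega> * \<gamma>"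
    by (simp add: vec_eq_iff)
  then show ?thesis
    using dist_equiv_gauge[of 1 1 "vec \<omega>" C C \<gamma>] assms by (simp add: mult.commute)
qed

lemma walk_state_cnj:
  "walk_state (\<chi> i k. cnj (C$i$k)) (\<chi> s. cnj (\<gamma>$s)) n j $ s
     = cnj (walk_state C \<gamma> n j $ s)"
proof (induction n arbitrary: j s)
  case 0
  then show ?case by (simp add: walk_state_0 initial_state_def)
next
  case (Suc n)
  then show ?case
    using exhaust_2[of s] by (auto simp: walk_state_Suc walk_op_nth_1 walk_op_nth_2)
qed

lemma dist_equiv_cnj: "dist_equiv (C, \<gamma>) (\<chi> i k. cnj (C$i$k), \<chi> s. cnj (\<gamma>$s))"
  by (rule dist_equivI) (simp add: walk_state_cnj)

lemma dist_equiv_gamma_phi_xi_abs: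
  "dist_equiv (coin_theta \<theta>, gamma_phi_xi \<phi> \<xi>) (coin_theta \<theta>, gamma_phi_xi \<phi> \<bar>\<xi>\<bar>)"
proof (cases "\<xi> \<ge> 0")
  case True
  then show ?thesis by (simp add: dist_equiv_def)
next
  case False
  have "(\<chi> i k. cnj (coin_theta \<theta> $ i $ k)) = coin_theta \<theta>"
    by (simp add: vec_eq_iff coin_theta_def)
  moreover have "(\<chi> s. cnj (gamma_phi_xi \<phi> \<xi> $ s)) = gamma_phi_xi \<phi> \<bar>\<xi>\<bar>"
    using False by (simp add: vec_eq_iff gamma_phi_xi_def exp_cnj)
  ultimately show ?thesis
    using dist_equiv_cnj[of "coin_theta \<theta>" "gamma_phi_xi \<phi> \<xi>"] by simp
qed

lemma unit_vector2_eq_phase_gamma_phi_xi: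
  fixes \<gamma> :: "complex^2"
  assumes "norm \<gamma> = 1"
  obtains \<phi> \<xi> \<omega> where "\<phi> \<in> {0..pi/2}" "\<xi> \<in> {-pi<..pi}" "norm \<omega> = 1"
    "\<gamma> = \<omega> *s gamma_phi_xi \<phi> \<xi>"
proof -
  have "(norm (\<gamma>$1))\<^sup>2 + (norm (\<gamma>$2))\<^sup>2 = 1"
    using assms by (simp add: norm_vec2)
  then obtain \<phi> where \<phi>: "0 \<le> \<phi>" "\<phi> \<le> pi/2" "norm (\<gamma>$1) = cos \<phi>" "norm (\<gamma>$2) = sin \<phi>"
    using sincos_total_pi_half[OF norm_ge_zero norm_ge_zero] by blast
  define \<omega> where "\<omega> = cis (Arg (\<gamma>$1))"
  define \<xi> where "\<xi> = Arg (cis (Arg (\<gamma>$2) - Arg (\<gamma>$1)))"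
  have "cis \<xi> = cis (Arg (\<gamma>$2) - Arg (\<gamma>$1))"
    unfolding \<xi>_def by (simp add: cis_Arg)
  then have "\<omega> * cis \<xi> = cis (Arg (\<gamma>$2))"
    by (simp add: \<omega>_def cis_mult)
  then have "\<gamma>$2 = sin \<phi> * (\<omega> * cis \<xi>)"
    using rcis_cmod_Arg[of "\<gamma>$2"] by (simp add: rcis_def \<phi>)
  moreover have "\<gamma>$1 = \<omega> * cos \<phi>"
    using rcis_cmod_Arg[of "\<gamma>$1"] by (simp add: rcis_def \<phi> \<omega>_def mult.commute)
  ultimately have "\<gamma> = \<omega> *s gamma_phi_xi \<phi> \<xi>"
    by (simp add: vec_eq_iff forall_2 gamma_phi_xi_def mult_ac flip: cis_conv_exp)
  moreover have "\<xi> \<in> {-pi<..pi}"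
    using Arg_bounded[of "cis (Arg (\<gamma>$2) - Arg (\<gamma>$1))"] by (simp add: \<xi>_def)
  ultimately show ?thesis
    using \<phi>(1,2) by (intro that[of \<phi> \<xi> \<omega>]) (auto simp: \<omega>_def)
qed

lemma dist_equiv_coin_theta_gamma_phi_xi:
  fixes \<gamma> :: "complex^2"
  assumes "norm \<gamma> = 1"
  shows "\<exists>\<phi> \<xi>. \<phi> \<in> {0..pi/2} \<and> \<xi> \<in> {0..pi} \<and>
           dist_equiv (coin_theta \<theta>, \<gamma>) (coin_theta \<theta>, gamma_phi_xi \<phi> \<xi>)"
proof -
  obtain \<phi> \<xi> \<omega> where \<phi>: "\<phi> \<in> {0..pi/2}" and \<xi>: "\<xi> \<in> {-pi<..pi}"
    and \<omega>: "norm \<omega> = 1" and \<gamma>: "\<gamma> = \<omega> *s gamma_phi_xi \<phi> \<xi>"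
    using unit_vector2_eq_phase_gamma_phi_xi[OF assms] .
  have "dist_equiv (coin_theta \<theta>, \<gamma>) (coin_theta \<theta>, gamma_phi_xi \<phi> \<bar>\<xi>\<bar>)"
    unfolding \<gamma>
    by (rule dist_equiv_trans[OF dist_equiv_global_phase[OF \<omega>] dist_equiv_gamma_phi_xi_abs])
  moreover have "\<bar>\<xi>\<bar> \<in> {0..pi}"
    using \<xi> by auto
  ultimately show ?thesis
    using \<phi> by blast
qed

lemma norm_eq_1_iff_mult_cnj: "norm (w :: complex) = 1 \<longleftrightarrow> w * cnj w = 1"
proof -
  have "w * cnj w = 1 \<longleftrightarrow> (norm w)\<^sup>2 = 1"
    by (metis complex_norm_square of_real_eq_1_iff)
  then show ?thesis
    using norm_ge_zero[of w] by (auto simp: power2_eq_1_iff)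
qed

lemma unitary2_entries:
  fixes C :: "complex^2^2"
  assumes "unitary2 C"
  shows "norm (det C) = 1" "(norm (C$1$1))\<^sup>2 + (norm (C$1$2))\<^sup>2 = 1"
    "C$2$1 = - det C * cnj (C$1$2)" "C$2$2 = det C * cnj (C$1$1)"
proof -
  have U: "C ** adjoint2 C = mat 1" "adjoint2 C ** C = mat 1"
    using assms by (simp_all add: unitary2_def)
  have "det (adjoint2 C) = cnj (det C)"
    by (simp add: det_2 adjoint2_def)
  then have "det C * cnj (det C) = 1"
    using arg_cong[OF U(1), of det] by (simp add: det_mul det_I)
  then show "norm (det C) = 1"
    by (simp add: norm_eq_1_iff_mult_cnj)
  have row: "(C ** adjoint2 C)$i$j = mat 1 $ i $ j"
    and col: "(adjoint2 C ** C)$i$j = mat 1 $ i $ j" for i j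
    using U by simp_all
  have "C$1$1 * cnj (C$1$1) + C$1$2 * cnj (C$1$2) = 1"
    using row[of 1 1] by (simp add: matrix_matrix_mult_def sum_2 adjoint2_def mat_def)
  then have "of_real ((norm (C$1$1))\<^sup>2 + (norm (C$1$2))\<^sup>2) = (1 :: complex)"
    unfolding of_real_add complex_norm_square .
  then show "(norm (C$1$1))\<^sup>2 + (norm (C$1$2))\<^sup>2 = 1"
    using of_real_eq_1_iff by blast
  show "C$2$1 = - det C * cnj (C$1$2)"
    using row[of 1 1] row[of 2 1] unfolding det_2
    by (simp add: matrix_matrix_mult_def sum_2 adjoint2_def mat_def) algebra
  show "C$2$2 = det C * cnj (C$1$1)"
    using col[of 1 1] col[of 1 2] unfolding det_2
    by (simp add: matrix_matrix_mult_def sum_2 adjoint2_def mat_def) algebra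
qed

lemma coin_theta_nth:
  "coin_theta \<theta> $ 1 $ 1 = cos \<theta>" "coin_theta \<theta> $ 1 $ 2 = sin \<theta>"
  "coin_theta \<theta> $ 2 $ 1 = - sin \<theta>" "coin_theta \<theta> $ 2 $ 2 = cos \<theta>"
  by (simp_all add: coin_theta_def)

lemma complex_unit_phase:
  fixes z :: complex
  obtains w where "norm w = 1" "z = of_real (norm z) * w"
proof
  show "norm (cis (Arg z)) = 1"
    by simp
  show "z = of_real (norm z) * cis (Arg z)"
    using rcis_cmod_Arg[of z] by (simp add: rcis_def)
qed

lemma unitary2_gauge_coin_theta:
  fixes C :: "complex^2^2"
  assumes "unitary2 C"
  obtains \<theta> u z e where "\<theta> \<in> {0..pi/2}"
    "norm u = 1" "norm z = 1" "norm (e$1) = 1" "norm (e$2) = 1"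
    "\<And>k. C$1$k * e$k = u * z * e$1 * coin_theta \<theta> $ 1 $ k"
    "\<And>k. C$2$k * e$k * z = u * e$2 * coin_theta \<theta> $ 2 $ k"
proof -
  note C = unitary2_entries[OF assms]
  obtain \<theta> where \<theta>: "0 \<le> \<theta>" "\<theta> \<le> pi/2" "norm (C$1$1) = cos \<theta>" "norm (C$1$2) = sin \<theta>"
    using sincos_total_pi_half[OF norm_ge_zero norm_ge_zero C(2)] by blast
  obtain A where A: "norm A = 1" "C$1$1 = of_real (norm (C$1$1)) * A"
    using complex_unit_phase .
  obtain B where B: "norm B = 1" "C$1$2 = of_real (norm (C$1$2)) * B"
    using complex_unit_phase .
  define U where "U = csqrt (det C)"
  have U: "norm U = 1" "U\<^sup>2 = det C"
    using C(1) by (simp_all add: U_def)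
  have unit: "A * cnj A = 1" "B * cnj B = 1" "U * cnj U = 1"
    using A(1) B(1) U(1) by (simp_all add: norm_eq_1_iff_mult_cnj)
  have entries: "C$1$1 = cos \<theta> * A" "C$1$2 = sin \<theta> * B"
    "C$2$1 = - U\<^sup>2 * (sin \<theta> * cnj B)" "C$2$2 = U\<^sup>2 * (cos \<theta> * cnj A)"
    using A(2) B(2) C(3,4) by (simp_all add: \<theta> U(2))
  define e :: "complex^2" where "e = (\<chi> k. if k = 1 then 1 else A * cnj B)"
  have e: "e$1 = 1" "e$2 = A * cnj B"
    by (simp_all add: e_def)
  have row1: "C$1$1 * e$1 = U * (A * cnj U) * e$1 * coin_theta \<theta> $ 1 $ 1"
    "C$1$2 * e$2 = U * (A * cnj U) * e$1 * coin_theta \<theta> $ 1 $ 2"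
    unfolding entries e coin_theta_nth using unit by algebra+
  have row2: "C$2$1 * e$1 * (A * cnj U) = U * e$2 * coin_theta \<theta> $ 2 $ 1"
    "C$2$2 * e$2 * (A * cnj U) = U * e$2 * coin_theta \<theta> $ 2 $ 2"
    unfolding entries e coin_theta_nth of_real_minus using unit by algebra+
  show thesis
  proof (rule that[of \<theta> U "A * cnj U" e])
    show "C$1$k * e$k = U * (A * cnj U) * e$1 * coin_theta \<theta> $ 1 $ k"
      and "C$2$k * e$k * (A * cnj U) = U * e$2 * coin_theta \<theta> $ 2 $ k" for k
      using exhaust_2[of k] row1 row2 by auto
  qed (use \<theta> A(1) B(1) U(1) in \<open>auto simp: e norm_mult\<close>)
qed

lemma unitary2_dist_equiv_coin_theta:
  fixes C :: "complex^2^2"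
  assumes "unitary2 C"
  obtains \<theta> where "\<theta> \<in> {0..pi/2}"
    "\<And>\<gamma>. \<exists>\<gamma>'. norm \<gamma>' = norm \<gamma> \<and> dist_equiv (C, \<gamma>) (coin_theta \<theta>, \<gamma>')"
proof -
  obtain \<theta> u z e where \<theta>: "\<theta> \<in> {0..pi/2}"
    and norms: "norm u = 1" "norm z = 1" "norm (e$1) = 1" "norm (e$2) = 1"
    and rows: "\<And>k. C$1$k * e$k = u * z * e$1 * coin_theta \<theta> $ 1 $ k"
      "\<And>k. C$2$k * e$k * z = u * e$2 * coin_theta \<theta> $ 2 $ k"
    using unitary2_gauge_coin_theta[OF assms] by blast
  have "\<exists>\<gamma>'. norm \<gamma>' = norm \<gamma> \<and> dist_equiv (C, \<gamma>) (coin_theta \<theta>, \<gamma>')" for \<gamma>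
  proof (intro exI conjI)
    define \<gamma>' where "\<gamma>' = (\<chi> k. \<gamma>$k / e$k)"
    have "e$1 \<noteq> 0" "e$2 \<noteq> 0"
      using norms(3,4) by auto
    then have "e * \<gamma>' = \<gamma>"
      by (simp add: vec_eq_iff forall_2 \<gamma>'_def)
    then show "dist_equiv (C, \<gamma>) (coin_theta \<theta>, \<gamma>')"
      using dist_equiv_gauge[OF norms rows, of \<gamma>'] by simp
    show "norm \<gamma>' = norm \<gamma>"
      using norms(3,4) by (simp add: norm_vec2 \<gamma>'_def norm_divide)
  qed
  with \<theta> show thesis
    by (rule that)
qed

theorem theorem3:
  fixes C :: "complex^2^2" and \<gamma> :: "complex^2"
  assumes "unitary2 C" and "norm \<gamma> = 1"
  shows "\<exists>\<phi> \<xi> \<theta>. \<phi> \<in> {0..pi/2} \<and> \<xi> \<in> {0..pi} \<and> \<theta> \<in> {0..pi/2} \<and>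
           dist_equiv (C, \<gamma>) (coin_theta \<theta>, gamma_phi_xi \<phi> \<xi>)"
proof -
  obtain \<theta> where \<theta>: "\<theta> \<in> {0..pi/2}"
    and coin: "\<And>\<gamma>. \<exists>\<gamma>'. norm \<gamma>' = norm \<gamma> \<and> dist_equiv (C, \<gamma>) (coin_theta \<theta>, \<gamma>')"
    using unitary2_dist_equiv_coin_theta[OF assms(1)] by blast
  obtain \<gamma>' where "norm \<gamma>' = 1" and to_coin_theta: "dist_equiv (C, \<gamma>) (coin_theta \<theta>, \<gamma>')"
    using coin[of \<gamma>] assms(2) by auto
  then obtain \<phi> \<xi> where "\<phi> \<in> {0..pi/2}" "\<xi> \<in> {0..pi}"
    "dist_equiv (coin_theta \<theta>, \<gamma>') (coin_theta \<theta>, gamma_phi_xi \<phi> \<xi>)"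
    using dist_equiv_coin_theta_gamma_phi_xi by blast
  then show ?thesis
    using \<theta> dist_equiv_trans[OF to_coin_theta] by blast
qed

end
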